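(* Let $\mathfrak g=\mathfrak k\oplus\mathfrak m$ be a Pauli-spanned Cartan decomposition, and let $b_1\neq b_2$ be two commuting Pauli strings in $\tilde{\mathfrak m}$ lying in the same connected component of the frustration graph of $\mathfrak g$. Then there exists a Pauli string $k\in\tilde{\mathfrak k}$ with $[k,b_1]\neq0$ and $[k,b_2]\neq0$; i.e. $\tilde{\mathfrak k}^{12}$ is non-empty.
   Context: Pauli strings on $n$ qubits are tensor products of $I,X,Y,Z$, not all identity; two Pauli strings either commute or anticommute. A Pauli-spanned Cartan decomposition is $\mathfrak g=\mathfrak k\oplus\mathfrak m\subseteq\mathfrak{su}(2^n)$ with $\mathfrak k=\mathrm{span}_{i\mathbb R}\tilde{\mathfrak k}$, $\mathfrak m=\mathrm{span}_{i\mathbb R}\tilde{\mathfrak m}$, $\mathfrak g=\mathrm{span}_{i\mathbb R}\tilde{\mathfrak g}$ with $\tilde{\mathfrak g}=\tilde{\mathfrak k}\sqcup\tilde{\mathfrak m}$ the set of all Pauli strings (up to phase) $\sigma$ with $i\sigma\in\mathfrak g$, and $[\mathfrak k,\mathfrak k]\subseteq\mathfrak k$, $[\mathfrak m,\mathfrak m]\subseteq\mathfrak k$, $[\mathfrak k,\mathfrak m]\subseteq\mathfrak m$. The frustration graph of $\mathfrak g$ has vertex set $\tilde{\mathfrak g}$, with edges between anticommuting pairs. For Pauli strings $b_1,b_2,\dots$ and disjoint index lists, $\tilde{\mathfrak k}^{i_1i_2\dots}_{j_1j_2\dots}$ is the set of $k\in\tilde{\mathfrak k}$ anticommuting with every $b_{i_p}$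 and commuting with every $b_{j_q}$ (no condition on other indices). *)

theory Defs
  imports Main
begin

text \<open>Single-qubit Paulis up to phase, and their phase-free product.\<close>
datatype pauli = PI | PX | PY | PZ

fun pmul :: "pauli \<Rightarrow> pauli \<Rightarrow> pauli" where
  "pmul PI b = b"
| "pmul a PI = a"
| "pmul PX PX = PI" | "pmul PY PY = PI" | "pmul PZ PZ = PI"
| "pmul PX PY = PZ" | "pmul PY PX = PZ"
| "pmul PY PZ = PX" | "pmul PZ PY = PX"
| "pmul PZ PX = PY" | "pmul PX PZ = PY"

definition pauli_string :: "nat \<Rightarrow> pauli list \<Rightarrow> bool" where
  "pauli_string n s \<longleftrightarrow> length s = n \<and> (\<exists>i<n. s ! i \<noteq> PI)"

definition site_anticomm :: "pauli \<Rightarrow> pauli \<Rightarrow> bool" where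
  "site_anticomm a b \<longleftrightarrow> a \<noteq> PI \<and> b \<noteq> PI \<and> a \<noteq> b"

definition anticommute :: "pauli list \<Rightarrow> pauli list \<Rightarrow> bool" where
  "anticommute s t \<longleftrightarrow>
     odd (card {i. i < length s \<and> i < length t \<and> site_anticomm (s ! i) (t ! i)})"

text \<open>Product of Pauli strings up to phase (for anticommuting s, t the commutator
  [s,t] is a nonzero multiple of this product).\<close>
definition smul :: "pauli list \<Rightarrow> pauli list \<Rightarrow> pauli list" where
  "smul s t = map2 pmul s t"

text \<open>Pauli-spanned Cartan decomposition g = k + m with k = span K, m = span M.
  Since distinct Pauli strings are linearly independent and [s,t] is 0 if s,t commute
  and a nonzero multiple of s*t otherwise, the bracket conditions
  [k,k] \<subseteq> k, [m,m] \<subseteq> k, [k,m] \<subseteq> m are exactly the following closure conditions.\<close>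
definition pauli_cartan :: "nat \<Rightarrow> pauli list set \<Rightarrow> pauli list set \<Rightarrow> bool" where
  "pauli_cartan n K M \<longleftrightarrow>
     (\<forall>s\<in>K \<union> M. pauli_string n s) \<and> K \<inter> M = {} \<and>
     (\<forall>a\<in>K. \<forall>b\<in>K. anticommute a b \<longrightarrow> smul a b \<in> K) \<and>
     (\<forall>a\<in>M. \<forall>b\<in>M. anticommute a b \<longrightarrow> smul a b \<in> K) \<and>
     (\<forall>a\<in>K. \<forall>b\<in>M. anticommute a b \<longrightarrow> smul a b \<in> M)"

definition frustration_edges :: "pauli list set \<Rightarrow> (pauli list \<times> pauli list) set" where
  "frustration_edges G = {(a, b). a \<in> G \<and> b \<in> G \<and> anticommute a b}"

definition same_component :: "pauli list set \<Rightarrow> pauli list \<Rightarrow> pauli list \<Rightarrow> bool" where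
  "same_component G a b \<longleftrightarrow> a \<in> G \<and> b \<in> G \<and> (a, b) \<in> (frustration_edges G)\<^sup>*"

end

theory Submission
  imports Defs
begin

text \<open>Anticommutation is additive in the product: ab anticommutes with c iff exactly one
  of a, b does. Hence in a set of Pauli strings closed under products of anticommuting pairs
  every connected component of the frustration graph has diameter at most two, because a path
  a - c - b - d with a, b and c, d commuting can be shortcut through cb. So the commuting
  strings b1 \<noteq> b2 have a common neighbour c. If c lies in k we are done; otherwise
  b1 c lies in k, as [m, m] \<subseteq> k, and anticommutes with both b1 and b2.\<close>

lemma site_anticomm_commute: "site_anticomm x y = site_anticomm y x"
  by (auto simp: site_anticomm_def)

lemma site_anticomm_pmul_left:
  "site_anticomm (pmul x y) z \<longleftrightarrow> site_anticomm x z \<noteq> site_anticomm y z"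
  by (cases x; cases y; cases z; simp add: site_anticomm_def)

lemma pmul_commute: "pmul x y = pmul y x"
  by (cases x; cases y; simp)

lemma smul_commute: "smul a b = smul b a"
  unfolding smul_def
proof (induction a arbitrary: b)
  case (Cons x a)
  then show ?case by (cases b) (simp_all add: pmul_commute)
qed simp

lemma anticommute_commute: "anticommute a b \<longleftrightarrow> anticommute b a"
proof -
  have "{i. i < length a \<and> i < length b \<and> site_anticomm (a ! i) (b ! i)}
      = {i. i < length b \<and> i < length a \<and> site_anticomm (b ! i) (a ! i)}"
    using site_anticomm_commute by blast
  then show ?thesis
    by (simp add: anticommute_def)
qed

lemma not_anticommute_self: "\<not> anticommute a a"
  unfolding anticommute_def site_anticomm_def by simp

lemma odd_card_sym_diff:
  assumes "finite A" "finite B"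
  shows "odd (card (sym_diff A B)) \<longleftrightarrow> odd (card A) \<noteq> odd (card B)"
proof -
  have "card (sym_diff A B) = card (A - B) + card (B - A)"
    using assms by (intro card_Un_disjoint) auto
  moreover have "card (A - B) + card (A \<inter> B) = card A" "card (B - A) + card (A \<inter> B) = card B"
    using assms card_Diff_subset_Int[of A B] card_Diff_subset_Int[of B A]
      card_mono[of A "A \<inter> B"] card_mono[of B "A \<inter> B"] by (auto simp: Int_commute)
  ultimately show ?thesis by presburger
qed

lemma anticommute_smul_left:
  assumes "length a = n" "length b = n" "length c = n"
  shows "anticommute (smul a b) c \<longleftrightarrow> anticommute a c \<noteq> anticommute b c"
proof -
  define sites where "sites s = {i. i < n \<and> site_anticomm (s ! i) (c ! i)}" for s
  have parity: "anticommute s c \<longleftrightarrow> odd (card (sites s))" if "length s = n" for s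
    using that assms(3) by (simp add: anticommute_def sites_def)
  have "sites (smul a b) = sym_diff (sites a) (sites b)"
    using assms by (auto simp: sites_def smul_def site_anticomm_pmul_left)
  moreover have "length (smul a b) = n"
    using assms by (simp add: smul_def)
  moreover have "finite (sites s)" for s
    by (simp add: sites_def)
  ultimately show ?thesis
    using assms by (simp add: parity odd_card_sym_diff)
qed

definition lie_closed :: "nat \<Rightarrow> pauli list set \<Rightarrow> bool" where
  "lie_closed n G \<longleftrightarrow>
     (\<forall>s\<in>G. length s = n) \<and> (\<forall>a\<in>G. \<forall>b\<in>G. anticommute a b \<longrightarrow> smul a b \<in> G)"

lemma pauli_cartan_lie_closed:
  assumes "pauli_cartan n K M"
  shows "lie_closed n (K \<union> M)"
  unfolding lie_closed_def
proof (intro conjI ballI impI)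
  show "length s = n" if "s \<in> K \<union> M" for s
    using assms that by (simp add: pauli_cartan_def pauli_string_def)
  show "smul a b \<in> K \<union> M" if ab: "a \<in> K \<union> M" "b \<in> K \<union> M" "anticommute a b" for a b
  proof (cases "a \<in> M \<and> b \<in> K")
    case True
    then have "smul b a \<in> M"
      using assms ab(3) anticommute_commute[of a b] by (simp add: pauli_cartan_def)
    then show ?thesis
      by (simp add: smul_commute[of a b])
  next
    case False
    then show ?thesis
      using assms ab by (auto simp: pauli_cartan_def)
  qed
qed

lemma anticommute_shortcut:
  assumes "length a = n" "length b = n" "length c = n" "length d = n"
    and "anticommute a c" "anticommute c b" "anticommute b d"
    and "\<not> anticommute a b" "\<not> anticommute c d"
  shows "anticommute a (smul c b)" "anticommute (smul c b) d"
proof -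
  have "anticommute (smul c b) a"
    using assms
    by (simp add: anticommute_smul_left anticommute_commute[of c a] anticommute_commute[of b a])
  then show "anticommute a (smul c b)"
    by (simp add: anticommute_commute)
  show "anticommute (smul c b) d"
    using assms by (simp add: anticommute_smul_left)
qed

lemma same_component_distance_le_two:
  assumes "lie_closed n G" and "same_component G a b"
  shows "a = b \<or> anticommute a b \<or> (\<exists>c\<in>G. anticommute a c \<and> anticommute c b)"
proof -
  have "a \<in> G" and "(a, b) \<in> (frustration_edges G)\<^sup>*"
    using assms(2) by (simp_all add: same_component_def)
  have lengths: "length s = n" if "s \<in> G" for s
    using assms(1) that by (simp add: lie_closed_def)
  from \<open>(a, b) \<in> (frustration_edges G)\<^sup>*\<close> show ?thesis
  proof (induction rule: rtrancl_induct)
    case base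
    then show ?case by simp
  next
    case (step b d)
    have "b \<in> G" "d \<in> G" "anticommute b d"
      using step.hyps(2) by (simp_all add: frustration_edges_def)
    consider "a = b" | "anticommute a b"
      | (two_steps) c where "c \<in> G" "anticommute a c" "anticommute c b"
      using step.IH by blast
    then show ?case
    proof cases
      case two_steps
      show ?thesis
      proof (cases "anticommute a b \<or> anticommute c d")
        case True
        then show ?thesis using two_steps \<open>b \<in> G\<close> \<open>anticommute b d\<close> by blast
      next
        case False
        have "anticommute a (smul c b)" "anticommute (smul c b) d"
          using anticommute_shortcut[of a n b c d] two_steps False lengths
            \<open>a \<in> G\<close> \<open>b \<in> G\<close> \<open>d \<in> G\<close> \<open>anticommute b d\<close> by simp_all
        moreover have "smul c b \<in> G"
          using assms(1) two_steps \<open>b \<in> G\<close> by (simp add: lie_closed_def)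
        ultimately show ?thesis by blast
      qed
    qed (use \<open>b \<in> G\<close> \<open>anticommute b d\<close> in blast)+
  qed
qed

theorem corollaryC1:
  fixes n :: nat and K M :: "pauli list set" and b1 b2 :: "pauli list"
  assumes "pauli_cartan n K M"
    and "b1 \<in> M" and "b2 \<in> M" and "b1 \<noteq> b2"
    and "\<not> anticommute b1 b2"
    and "same_component (K \<union> M) b1 b2"
  shows "\<exists>k\<in>K. anticommute k b1 \<and> anticommute k b2"
proof -
  have closed: "lie_closed n (K \<union> M)"
    using assms(1) by (rule pauli_cartan_lie_closed)
  obtain c where "c \<in> K \<union> M" "anticommute b1 c" "anticommute c b2"
    using same_component_distance_le_two[OF closed assms(6)] assms(4,5) by blast
  show ?thesis
  proof (cases "c \<in> K")
    case True
    then show ?thesis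
      using \<open>anticommute b1 c\<close> \<open>anticommute c b2\<close> anticommute_commute by blast
  next
    case False
    with \<open>c \<in> K \<union> M\<close> have "c \<in> M" by blast
    then have "smul b1 c \<in> K"
      using assms(1,2) \<open>anticommute b1 c\<close> by (simp add: pauli_cartan_def)
    moreover have "length b1 = n" "length b2 = n" "length c = n"
      using closed assms(2,3) \<open>c \<in> M\<close> by (simp_all add: lie_closed_def)
    then have "anticommute (smul b1 c) b1" "anticommute (smul b1 c) b2"
      using assms(5) \<open>anticommute b1 c\<close> \<open>anticommute c b2\<close>
      by (simp_all add: anticommute_smul_left not_anticommute_self anticommute_commute[of c b1])
    ultimately show ?thesis by blast
  qed
qed

end
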